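(* Let $D_0=\mathbb{D}$ and $D_j=D_{j-1}\setminus\mathcal{Z}_{j-1}$ for $j=1,2,\dots$, where each $\mathcal{Z}_{j-1}$ is a discrete set in $D_{j-1}$. Then every $D_j$ has the $3$-rd Hindmarsh property.
   Context: $\mathbb{D}$ is the open unit disk. A set $\mathcal{Z}\subset D$ is discrete in $D$ if it is at most countable with no accumulation points in $D$. A Schur function is an analytic $S:\mathbb{D}\to\mathbb{C}$ with $|S|\le1$. Pick matrix: $P_k(f;z_1,\dots,z_k)=\left[\frac{1-f(z_i)\overline{f(z_j)}}{1-z_i\overline{z_j}}\right]_{i,j=1}^k$. For an integer $k\ge3$, an open set $D\subseteq\mathbb{D}$ has the $k$-th Hindmarsh property if every function $f:D\to\mathbb{C}$ such that $P_k(f;z_1,\dots,z_k)$ is positive semidefinite for every choice of distinct $z_1,\dots,z_k\in D$ admits an extension to a Schur function on $\mathbb{D}$. Hindmarsh's theorem (may be assumed): $\mathbb{D}$ has the $3$-rd Hindmarsh property; more precisely, if $U\subseteq\mathbb{D}$ is open and $f:U\to\mathbb{C}$ has $P_3(f;z_1,z_2,z_3)\ge0$ for all $z_1,z_2,z_3\in U$, then $f$ is analytic on $U$ with $|f|\le1$. *)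

theory Defs
  imports "HOL-Analysis.Analysis"
begin

definition pick_matrix :: "(complex \<Rightarrow> complex) \<Rightarrow> (nat \<Rightarrow> complex) \<Rightarrow> nat \<Rightarrow> nat \<Rightarrow> complex" where
  "pick_matrix f z i j = (1 - f (z i) * cnj (f (z j))) / (1 - z i * cnj (z j))"

definition psd_matrix :: "nat \<Rightarrow> (nat \<Rightarrow> nat \<Rightarrow> complex) \<Rightarrow> bool" where
  "psd_matrix k P \<longleftrightarrow> (\<forall>c :: nat \<Rightarrow> complex.
     (let q = (\<Sum>i<k. \<Sum>j<k. cnj (c i) * P i j * c j) in Im q = 0 \<and> Re q \<ge> 0))"

definition schur_function :: "(complex \<Rightarrow> complex) \<Rightarrow> bool" where
  "schur_function S \<longleftrightarrow> S holomorphic_on ball 0 1 \<and> (\<forall>z\<in>ball 0 1. norm (S z) \<le> 1)"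

definition discrete_in :: "complex set \<Rightarrow> complex set \<Rightarrow> bool" where
  "discrete_in Z D \<longleftrightarrow> Z \<subseteq> D \<and> countable Z \<and> (\<forall>x\<in>D. \<not> x islimpt Z)"

definition hindmarsh_property :: "nat \<Rightarrow> complex set \<Rightarrow> bool" where
  "hindmarsh_property k D \<longleftrightarrow> open D \<and> D \<subseteq> ball 0 1 \<and>
     (\<forall>f :: complex \<Rightarrow> complex.
        (\<forall>z :: nat \<Rightarrow> complex. (\<forall>i<k. z i \<in> D) \<and> inj_on z {..<k} \<longrightarrow> psd_matrix k (pick_matrix f z))
        \<longrightarrow> (\<exists>S. schur_function S \<and> (\<forall>w\<in>D. S w = f w)))"

end

(*
  Hindmarsh's theorem: if all 3-point Pick matrices of f are positive semidefinite on an open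
  U inside the disc, then f is holomorphic on U with |f| <= 1. The diagonal entries give |f| <= 1,
  and if |f(a)| = 1 the 2x2 minors force f to be constant. Otherwise the Schur complement of
  P_3(f; a, z, w) at the entry of a is a diagonal congruence of the 2-point Pick matrix of the
  Schur transform h = (f - f(a)) / ((1 - conj (f a) f) b_a), b_a the Blaschke factor at a. Hence
  |h| <= 1 and h is Lipschitz on a punctured disc around a, so h has a limit at a, and inverting
  the transform shows that f is complex differentiable at a.

  Each D_j is open, and a bounded holomorphic function on D_(j+1) = D_j - Z_j extends across the
  discrete set Z_j by Riemann's removable singularity theorem. By induction every holomorphic
  function on D_j bounded by 1 is the restriction of a Schur function.
*)

theory Submission
  imports Defs "HOL-Complex_Analysis.Complex_Analysis"
begin

section \<open>Hermitian forms and positive semidefinite matrices\<close>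

definition herm_form ::
    "nat \<Rightarrow> (nat \<Rightarrow> nat \<Rightarrow> complex) \<Rightarrow> (nat \<Rightarrow> complex) \<Rightarrow> (nat \<Rightarrow> complex) \<Rightarrow> complex" where
  "herm_form k P u v = (\<Sum>i<k. \<Sum>j<k. cnj (u i) * P i j * v j)"

lemma psd_matrix_herm_form:
  assumes "psd_matrix k P"
  shows "herm_form k P u u = of_real (Re (herm_form k P u u))" and "0 \<le> Re (herm_form k P u u)"
  using assms unfolding psd_matrix_def herm_form_def Let_def by (simp_all add: complex_eq_iff)

lemma herm_form_swap:
  assumes "\<And>i j. P j i = cnj (P i j)"
  shows "herm_form k P v u = cnj (herm_form k P u v)"
proof -
  have "herm_form k P v u = (\<Sum>j<k. \<Sum>i<k. cnj (v i) * P i j * u j)"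
    unfolding herm_form_def by (rule sum.swap)
  also have "\<dots> = cnj (herm_form k P u v)"
    unfolding herm_form_def by (simp add: assms[symmetric] mult.commute mult.left_commute)
  finally show ?thesis .
qed

lemma herm_form_linear_left:
  "herm_form k P (\<lambda>i. a * u i + b * v i) w = cnj a * herm_form k P u w + cnj b * herm_form k P v w"
  unfolding herm_form_def by (simp add: algebra_simps sum.distrib sum_distrib_left)

lemma herm_form_linear_right:
  "herm_form k P w (\<lambda>i. a * u i + b * v i) = a * herm_form k P w u + b * herm_form k P w v"
  unfolding herm_form_def by (simp add: algebra_simps sum.distrib sum_distrib_left)

lemma herm_form_unit_vectors:
  assumes "i < k" "j < k"
  shows "herm_form k P (\<lambda>l. if l = i then 1 else 0) (\<lambda>l. if l = j then 1 else 0) = P i j"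
  using assms unfolding herm_form_def
  by (auto simp: if_distrib[of cnj] if_distrib[of "\<lambda>x. x * _"] if_distrib[of "\<lambda>x. _ * x"] cong: if_cong)

lemma herm_form_cauchy_schwarz:
  assumes psd: "psd_matrix k P" and herm: "\<And>i j. P j i = cnj (P i j)"
  shows "(cmod (herm_form k P u v))^2 \<le> Re (herm_form k P u u) * Re (herm_form k P v v)"
proof -
  define \<beta> where "\<beta> = herm_form k P u v"
  define A where "A = Re (herm_form k P u u)"
  define B where "B = Re (herm_form k P v v)"
  have quadratic_nonneg: "0 \<le> A - 2 * s * (cmod \<beta>)^2 + s^2 * (cmod \<beta>)^2 * B" for s :: real
  proof -
    define t where "t = - of_real s * cnj \<beta>"
    have "herm_form k P (\<lambda>i. 1 * u i + t * v i) (\<lambda>i. 1 * u i + t * v i)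
        = of_real A + t * \<beta> + cnj t * cnj \<beta> + cnj t * t * of_real B"
      unfolding herm_form_linear_left herm_form_linear_right herm_form_swap[OF herm, where u = u and v = v]
        A_def B_def \<beta>_def
        psd_matrix_herm_form(1)[OF psd, of u, symmetric] psd_matrix_herm_form(1)[OF psd, of v, symmetric]
      by (simp add: algebra_simps)
    also have "\<dots> = of_real (A - 2 * s * (cmod \<beta>)^2 + s^2 * (cmod \<beta>)^2 * B)"
      unfolding t_def using complex_norm_square[of \<beta>] by (simp add: algebra_simps power2_eq_square)
    finally show ?thesis
      using psd_matrix_herm_form(2)[OF psd, of "\<lambda>i. 1 * u i + t * v i"] by simp
  qed
  have "(cmod \<beta>)^2 \<le> A * B"
  proof (cases "B = 0")
    case True
    have "\<beta> = 0"
    proof (rule ccontr)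
      assume "\<beta> \<noteq> 0"
      with quadratic_nonneg[of "(A + 1) / (2 * (cmod \<beta>)^2)"] True show False
        by (simp add: field_simps)
    qed
    with True show ?thesis by simp
  next
    case False
    with psd_matrix_herm_form(2)[OF psd, of v] have "B > 0" by (simp add: B_def)
    with quadratic_nonneg[of "1 / B"] show ?thesis
      by (simp add: field_simps power2_eq_square)
  qed
  then show ?thesis by (simp add: A_def B_def \<beta>_def)
qed

definition psd_on_pair :: "(nat \<Rightarrow> nat \<Rightarrow> complex) \<Rightarrow> nat \<Rightarrow> nat \<Rightarrow> bool" where
  "psd_on_pair Q i j \<longleftrightarrow> 0 \<le> Re (Q i i) \<and> 0 \<le> Re (Q j j) \<and>
     (cmod (Q i j))^2 \<le> Re (Q i i) * Re (Q j j)"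

lemma psd_on_pair_gram:
  assumes psd: "psd_matrix k P" and herm: "\<And>i j. P j i = cnj (P i j)"
    and gram: "\<And>p q. p \<in> {i, j} \<Longrightarrow> q \<in> {i, j} \<Longrightarrow> Q p q = herm_form k P (u p) (u q)"
  shows "psd_on_pair Q i j"
proof -
  have "Q i i = herm_form k P (u i) (u i)" "Q j j = herm_form k P (u j) (u j)"
    "Q i j = herm_form k P (u i) (u j)"
    by (simp_all add: gram)
  then show ?thesis
    unfolding psd_on_pair_def
    using psd_matrix_herm_form(2)[OF psd] herm_form_cauchy_schwarz[OF psd herm] by simp
qed

lemma psd_on_pair_psd_matrix:
  assumes "psd_matrix k P" "\<And>i j. P j i = cnj (P i j)" "i < k" "j < k"
  shows "psd_on_pair P i j"
  by (rule psd_on_pair_gram[OF assms(1,2), where u = "\<lambda>p l. if l = p then 1 else 0"])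
    (use assms(3,4) herm_form_unit_vectors in auto)

definition schur_complement :: "(nat \<Rightarrow> nat \<Rightarrow> complex) \<Rightarrow> nat \<Rightarrow> nat \<Rightarrow> complex" where
  "schur_complement P i j = P i j - P i 0 * P 0 j / P 0 0"

lemma psd_on_pair_schur_complement:
  assumes psd: "psd_matrix k P" and herm: "\<And>i j. P j i = cnj (P i j)"
    and "P 0 0 \<noteq> 0" "i < k" "j < k"
  shows "psd_on_pair (schur_complement P) i j"
proof -
  define e :: "nat \<Rightarrow> nat \<Rightarrow> complex" where "e p l = (if l = p then 1 else 0)" for p l
  define u where "u p l = 1 * e p l + (- cnj (P p 0 / P 0 0)) * e 0 l" for p l
  have "schur_complement P p q = herm_form k P (u p) (u q)" if "p < k" "q < k" for p q
    using that \<open>i < k\<close> \<open>P 0 0 \<noteq> 0\<close> herm[of 0 q] herm[of 0 0]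
    unfolding u_def herm_form_linear_left herm_form_linear_right e_def
    by (simp add: herm_form_unit_vectors schur_complement_def field_simps)
  with assms(4,5) show ?thesis by (intro psd_on_pair_gram[OF psd herm]) auto
qed

section \<open>Pick matrices and the Schur algorithm\<close>

lemma pick_matrix_hermitian: "pick_matrix f zs j i = cnj (pick_matrix f zs i j)"
  unfolding pick_matrix_def by (simp add: mult.commute)

lemma one_minus_mult_neq_0:
  fixes x y :: complex
  assumes "cmod x < 1" "cmod y \<le> 1"
  shows "1 - x * y \<noteq> 0"
proof -
  have "cmod x * cmod y \<le> cmod x"
    using assms(2) by (simp add: mult_left_le)
  with assms(1) have "cmod (x * y) < 1"
    by (simp add: norm_mult)
  then show ?thesis by auto
qed

lemma one_minus_le_norm_one_minus_mult_cnj: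
  fixes z w :: complex
  assumes "cmod z \<le> \<rho>" "cmod w \<le> 1"
  shows "1 - \<rho> \<le> cmod (1 - z * cnj w)"
proof -
  have "cmod z * cmod w \<le> \<rho>"
    using mult_left_le[OF assms(2) norm_ge_zero[of z]] assms(1) by linarith
  then show ?thesis
    using norm_triangle_ineq2[of 1 "z * cnj w"] by (simp add: norm_mult)
qed

definition blaschke :: "complex \<Rightarrow> complex \<Rightarrow> complex" where
  "blaschke a z = (z - a) / (1 - cnj a * z)"

definition schur_factor :: "(complex \<Rightarrow> complex) \<Rightarrow> complex \<Rightarrow> complex \<Rightarrow> complex" where
  "schur_factor f a z = (1 - cnj (f a) * f z) * blaschke a z"

definition schur_step :: "(complex \<Rightarrow> complex) \<Rightarrow> complex \<Rightarrow> complex \<Rightarrow> complex" where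
  "schur_step f a z = (f z - f a) / schur_factor f a z"

lemma schur_factor_neq_0:
  assumes "cmod a < 1" "cmod z < 1" "cmod (f a) < 1" "cmod (f z) \<le> 1" "z \<noteq> a"
  shows "schur_factor f a z \<noteq> 0"
  using assms one_minus_mult_neq_0[of "cnj (f a)" "f z"] one_minus_mult_neq_0[of "cnj a" z]
  by (simp add: schur_factor_def blaschke_def)

lemma schur_complement_pick_matrix:
  assumes "zs 0 = a" "cmod a < 1" "cmod (zs i) < 1" "cmod (zs j) < 1" "cmod (f a) < 1"
    and "schur_factor f a (zs i) \<noteq> 0" "schur_factor f a (zs j) \<noteq> 0"
  shows "of_real (1 - (cmod (f a))^2) * schur_complement (pick_matrix f zs) i j
    = schur_factor f a (zs i) * cnj (schur_factor f a (zs j)) * pick_matrix (schur_step f a) zs i j"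
proof -
  define z w p q \<alpha> where "z = zs i" and "w = zs j" and "p = f z" and "q = f w" and "\<alpha> = f a"
  define N M where "N = schur_factor f a z" and "M = schur_factor f a w"
  have "N \<noteq> 0" "M \<noteq> 0"
    using assms(6,7) by (simp_all add: N_def M_def z_def w_def)
  have nz: "1 - a * cnj a \<noteq> 0" "1 - z * cnj a \<noteq> 0" "1 - a * cnj w \<noteq> 0"
    "1 - z * cnj w \<noteq> 0" "1 - \<alpha> * cnj \<alpha> \<noteq> 0"
    using assms(2-5) one_minus_mult_neq_0
    by (simp_all add: mult.commute[of a] mult.commute[of z] z_def w_def \<alpha>_def)
  have N: "N = (1 - cnj \<alpha> * p) * (z - a) / (1 - cnj a * z)"
    and cnj_M: "cnj M = (1 - \<alpha> * cnj q) * (cnj w - cnj a) / (1 - a * cnj w)"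
    by (simp_all add: N_def M_def \<alpha>_def p_def q_def schur_factor_def blaschke_def mult.commute)
  have "of_real (1 - (cmod \<alpha>)^2) * schur_complement (pick_matrix f zs) i j
      = (1 - \<alpha> * cnj \<alpha>) * ((1 - p * cnj q) / (1 - z * cnj w)
          - (1 - p * cnj \<alpha>) / (1 - z * cnj a) * ((1 - \<alpha> * cnj q) / (1 - a * cnj w))
            / ((1 - \<alpha> * cnj \<alpha>) / (1 - a * cnj a)))"
    using complex_norm_square[of \<alpha>]
    by (simp add: schur_complement_def pick_matrix_def assms(1) z_def w_def p_def q_def \<alpha>_def)
  also have "\<dots> = (N * cnj M - (p - \<alpha>) * cnj (q - \<alpha>)) / (1 - z * cnj w)"
    unfolding N cnj_M using nz by (simp add: divide_simps) algebra
  also have "\<dots> = N * cnj M * ((1 - (p - \<alpha>) / N * cnj ((q - \<alpha>) / M)) / (1 - z * cnj w))"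
    using \<open>N \<noteq> 0\<close> \<open>M \<noteq> 0\<close> nz(4) by (simp add: field_simps)
  also have "\<dots> = N * cnj M * pick_matrix (schur_step f a) zs i j"
    by (simp add: pick_matrix_def schur_step_def N_def M_def p_def q_def \<alpha>_def z_def w_def)
  finally show ?thesis
    by (simp add: N_def M_def z_def w_def \<alpha>_def)
qed

lemma psd_on_pair_congruence:
  assumes S: "psd_on_pair S i j" and "k > 0" "c i \<noteq> 0" "c j \<noteq> 0"
    and eq: "\<And>p q. p \<in> {i, j} \<Longrightarrow> q \<in> {i, j} \<Longrightarrow> of_real k * S p q = c p * cnj (c q) * Q p q"
  shows "psd_on_pair Q i j"
proof -
  have diag: "Re (Q p p) = k / (cmod (c p))^2 * Re (S p p)" if "p \<in> {i, j}" for p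
  proof -
    have "c p \<noteq> 0" using that assms(3,4) by auto
    have "of_real k * S p p = of_real ((cmod (c p))^2) * Q p p"
      using eq[OF that that] complex_norm_square[of "c p"] by simp
    then have "Q p p = of_real (k / (cmod (c p))^2) * S p p"
      using \<open>c p \<noteq> 0\<close> by (simp add: field_simps)
    then show ?thesis by simp
  qed
  have "k * cmod (S i j) = cmod (c i) * cmod (c j) * cmod (Q i j)"
    using arg_cong[OF eq[of i j], of cmod] \<open>k > 0\<close> by (simp add: norm_mult)
  then have off: "cmod (Q i j) = k / (cmod (c i) * cmod (c j)) * cmod (S i j)"
    using assms(3,4) by (simp add: field_simps)
  have "(cmod (Q i j))^2 = (k / (cmod (c i) * cmod (c j)))^2 * (cmod (S i j))^2"
    unfolding off by (simp add: power_mult_distrib power_divide)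
  also have "\<dots> \<le> (k / (cmod (c i) * cmod (c j)))^2 * (Re (S i i) * Re (S j j))"
    using S unfolding psd_on_pair_def by (intro mult_left_mono) auto
  also have "\<dots> = Re (Q i i) * Re (Q j j)"
    by (simp add: diag power_mult_distrib power_divide power2_eq_square mult_ac)
  finally show ?thesis
    using S \<open>k > 0\<close> unfolding psd_on_pair_def by (simp add: diag)
qed

lemma pick_matrix_diag:
  "pick_matrix h zs i i = of_real ((1 - (cmod (h (zs i)))^2) / (1 - (cmod (zs i))^2))"
  using complex_norm_square[of "h (zs i)"] complex_norm_square[of "zs i"]
  by (simp add: pick_matrix_def)

lemma pick_matrix_diag_nonneg_iff:
  assumes "cmod (zs i) < 1"
  shows "0 \<le> Re (pick_matrix h zs i i) \<longleftrightarrow> cmod (h (zs i)) \<le> 1"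
proof -
  have "0 < 1 - (cmod (zs i))^2"
    using assms by (simp add: power_less_one_iff abs_square_less_1)
  then show ?thesis
    using less_imp_le[OF assms]
    by (simp add: pick_matrix_diag zero_le_divide_iff power_le_one_iff abs_square_le_1)
qed

lemma pick_matrix_diag_pos_iff:
  assumes "cmod (zs i) < 1"
  shows "0 < Re (pick_matrix h zs i i) \<longleftrightarrow> cmod (h (zs i)) < 1"
proof -
  have "0 < 1 - (cmod (zs i))^2"
    using assms by (simp add: power_less_one_iff abs_square_less_1)
  then have "0 < Re (pick_matrix h zs i i) \<longleftrightarrow> 0 < 1 - (cmod (h (zs i)))^2"
    unfolding pick_matrix_diag Re_complex_of_real by (simp add: field_simps)
  then show ?thesis
    by (simp add: power_less_one_iff abs_square_less_1)
qed

lemma psd_on_pair_schur_step: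
  assumes psd: "psd_matrix k (pick_matrix f zs)" and "zs 0 = a" "cmod (f a) < 1"
    and "i < k" "j < k" "zs i \<noteq> a" "zs j \<noteq> a" "cmod a < 1" "cmod (zs i) < 1" "cmod (zs j) < 1"
  shows "psd_on_pair (pick_matrix (schur_step f a) zs) i j"
proof -
  note herm = pick_matrix_hermitian[of f zs]
  have "cmod (f (zs i)) \<le> 1" "cmod (f (zs j)) \<le> 1"
    using psd_on_pair_psd_matrix[OF psd herm \<open>i < k\<close> \<open>j < k\<close>] assms(9,10)
      pick_matrix_diag_nonneg_iff[of zs i f] pick_matrix_diag_nonneg_iff[of zs j f]
    unfolding psd_on_pair_def by auto
  then have factors: "schur_factor f a (zs i) \<noteq> 0" "schur_factor f a (zs j) \<noteq> 0"
    using assms(3,6-10) schur_factor_neq_0 by auto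
  have "0 < Re (pick_matrix f zs 0 0)"
    using pick_matrix_diag_pos_iff[of zs 0 f] assms(2,3,8) by simp
  then have "psd_on_pair (schur_complement (pick_matrix f zs)) i j"
    using assms(4,5) by (intro psd_on_pair_schur_complement[OF psd herm]) auto
  then show ?thesis
  proof (rule psd_on_pair_congruence[where k = "1 - (cmod (f a))^2" and c = "\<lambda>i. schur_factor f a (zs i)"])
    show "0 < 1 - (cmod (f a))^2"
      using assms(3) by (simp add: power_less_one_iff abs_square_less_1)
    show "of_real (1 - (cmod (f a))^2) * schur_complement (pick_matrix f zs) p q
        = schur_factor f a (zs p) * cnj (schur_factor f a (zs q)) * pick_matrix (schur_step f a) zs p q"
      if "p \<in> {i, j}" "q \<in> {i, j}" for p q
      using that assms(2,3,8-10) factors by (intro schur_complement_pick_matrix) auto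
  qed (use factors in simp_all)
qed

lemma norm_one_minus_mult_cnj_squared:
  fixes x y :: complex
  shows "(cmod (1 - x * cnj y))^2 = (1 - (cmod x)^2) * (1 - (cmod y)^2) + (cmod (x - y))^2"
  unfolding cmod_power2 by (simp add: algebra_simps power2_eq_square)

lemma pick_inequality_imp_norm_diff_le:
  fixes x y z w :: complex
  assumes "cmod x \<le> 1" "cmod y \<le> 1"
    and pick: "(cmod (1 - x * cnj y))^2 * ((1 - (cmod z)^2) * (1 - (cmod w)^2))
      \<le> (1 - (cmod x)^2) * (1 - (cmod y)^2) * (cmod (1 - z * cnj w))^2"
  shows "cmod (x - y) * cmod (1 - z * cnj w) \<le> 2 * cmod (z - w)"
proof -
  define c E F where "c = (cmod (1 - x * cnj y))^2"
    and "E = (1 - (cmod z)^2) * (1 - (cmod w)^2)" and "F = (1 - (cmod x)^2) * (1 - (cmod y)^2)"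
  have "cmod (1 - x * cnj y) \<le> 1 + cmod x * cmod y"
    using norm_triangle_ineq4[of 1 "x * cnj y"] by (simp add: norm_mult)
  also have "\<dots> \<le> 2"
    using assms(1,2) mult_le_one[of "cmod x" "cmod y"] by simp
  finally have "c \<le> 4"
    using power_mono[of "cmod (1 - x * cnj y)" 2 2] by (simp add: c_def)
  have "(cmod (x - y))^2 * (cmod (1 - z * cnj w))^2 = c * (cmod (1 - z * cnj w))^2 - F * (cmod (1 - z * cnj w))^2"
    by (simp add: c_def F_def norm_one_minus_mult_cnj_squared algebra_simps)
  also have "\<dots> \<le> c * (cmod (1 - z * cnj w))^2 - c * E"
    using pick by (simp add: c_def E_def F_def)
  also have "\<dots> = c * (cmod (z - w))^2"
    by (simp add: E_def norm_one_minus_mult_cnj_squared algebra_simps)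
  also have "\<dots> \<le> 4 * (cmod (z - w))^2"
    using \<open>c \<le> 4\<close> by (intro mult_right_mono) auto
  finally have "(cmod (x - y) * cmod (1 - z * cnj w))^2 \<le> (2 * cmod (z - w))^2"
    by (simp add: power_mult_distrib)
  then show ?thesis
    by (rule power2_le_imp_le) simp
qed

lemma psd_on_pair_pick_matrix:
  assumes psd: "psd_on_pair (pick_matrix h zs) i j" and "cmod (zs i) < 1" "cmod (zs j) < 1"
  shows "cmod (h (zs i)) \<le> 1"
    and "cmod (h (zs i) - h (zs j)) * cmod (1 - zs i * cnj (zs j)) \<le> 2 * cmod (zs i - zs j)"
proof -
  define x y z w where "x = h (zs i)" and "y = h (zs j)" and "z = zs i" and "w = zs j"
  have z: "0 < 1 - (cmod z)^2" and w: "0 < 1 - (cmod w)^2"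
    using assms(2,3) by (simp_all add: z_def w_def power_less_one_iff abs_square_less_1)
  have zw: "0 < (cmod (1 - z * cnj w))^2"
    using one_minus_mult_neq_0[of z "cnj w"] assms(2,3) by (simp add: z_def w_def)
  have "cmod x \<le> 1" "cmod y \<le> 1"
    using psd assms(2,3) pick_matrix_diag_nonneg_iff
    unfolding psd_on_pair_def x_def y_def by blast+
  then show "cmod (h (zs i)) \<le> 1"
    by (simp add: x_def)
  define A D where "A = (cmod (1 - x * cnj y))^2" and "D = (cmod (1 - z * cnj w))^2"
  define E F where "E = (1 - (cmod z)^2) * (1 - (cmod w)^2)" and "F = (1 - (cmod x)^2) * (1 - (cmod y)^2)"
  have "0 < D" "0 < E"
    using z w zw by (simp_all add: D_def E_def)
  moreover have "A / D \<le> F / E"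
    using psd unfolding psd_on_pair_def pick_matrix_diag
    by (simp add: pick_matrix_def norm_divide power_divide A_def D_def E_def F_def
        x_def y_def z_def w_def)
  ultimately have "A * E \<le> F * D"
    by (simp add: divide_le_eq le_divide_eq field_simps)
  then have "(cmod (1 - x * cnj y))^2 * ((1 - (cmod z)^2) * (1 - (cmod w)^2))
      \<le> (1 - (cmod x)^2) * (1 - (cmod y)^2) * (cmod (1 - z * cnj w))^2"
    by (simp add: A_def D_def E_def F_def)
  with \<open>cmod x \<le> 1\<close> \<open>cmod y \<le> 1\<close> have "cmod (x - y) * cmod (1 - z * cnj w) \<le> 2 * cmod (z - w)"
    by (rule pick_inequality_imp_norm_diff_le)
  then show "cmod (h (zs i) - h (zs j)) * cmod (1 - zs i * cnj (zs j)) \<le> 2 * cmod (zs i - zs j)"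
    by (simp add: x_def y_def z_def w_def)
qed

lemma psd_on_pair_pick_matrix_unimodular:
  assumes psd: "psd_on_pair (pick_matrix h zs) i j" and "cmod (zs i) < 1" "cmod (zs j) < 1"
    and unimodular: "cmod (h (zs i)) = 1"
  shows "h (zs j) = h (zs i)"
proof -
  have "pick_matrix h zs i j = 0"
    using psd unimodular unfolding psd_on_pair_def pick_matrix_diag by simp
  moreover have "1 - zs i * cnj (zs j) \<noteq> 0"
    using one_minus_mult_neq_0[of "zs i" "cnj (zs j)"] assms(2,3) by simp
  ultimately have "h (zs i) * cnj (h (zs j)) = h (zs i) * cnj (h (zs i))"
    using complex_norm_square[of "h (zs i)"] unimodular by (simp add: pick_matrix_def)
  with unimodular have "cnj (h (zs j)) = cnj (h (zs i))"
    by auto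
  then show ?thesis by simp
qed

section \<open>Hindmarsh's theorem for three points\<close>

definition pick_positive :: "nat \<Rightarrow> complex set \<Rightarrow> (complex \<Rightarrow> complex) \<Rightarrow> bool" where
  "pick_positive k U f \<longleftrightarrow>
     (\<forall>z. (\<forall>i<k. z i \<in> U) \<and> inj_on z {..<k} \<longrightarrow> psd_matrix k (pick_matrix f z))"

lemma open_obtain_point_outside:
  fixes U :: "'a::{real_normed_vector, perfect_space} set"
  assumes "open U" "U \<noteq> {}" "finite F"
  obtains w where "w \<in> U" "w \<notin> F"
proof -
  have "infinite U"
    using finite_imp_not_open assms(1,2) by blast
  with assms(3) have "\<not> U \<subseteq> F"
    using finite_subset by blast
  with that show ?thesis by blast
qed

lemma pick_positive_triple:
  assumes "pick_positive 3 U f" "a \<in> U" "z \<in> U" "w \<in> U" "distinct [a, z, w]"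
  shows "psd_matrix 3 (pick_matrix f ((!) [a, z, w]))"
proof -
  have "\<forall>i<3. [a, z, w] ! i \<in> U"
    using assms(2-4) by (auto simp: less_Suc_eq numeral_3_eq_3)
  moreover have "inj_on ((!) [a, z, w]) {..<3}"
    using assms(5) by (intro inj_on_nth) auto
  ultimately show ?thesis
    using assms(1) unfolding pick_positive_def by blast
qed

lemma pick_positive_pair:
  assumes pick: "pick_positive 3 U f" and "open U" "a \<in> U" "z \<in> U" "a \<noteq> z"
  shows "psd_on_pair (pick_matrix f ((!) [a, z])) 0 1"
proof -
  obtain w where "w \<in> U" "w \<notin> {a, z}"
    using open_obtain_point_outside[of U "{a, z}"] assms(2,3) by blast
  moreover from this \<open>a \<noteq> z\<close> have "distinct [a, z, w]"
    by auto
  ultimately have "psd_matrix 3 (pick_matrix f ((!) [a, z, w]))"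
    using pick_positive_triple[OF pick \<open>a \<in> U\<close> \<open>z \<in> U\<close>] by blast
  then have "psd_on_pair (pick_matrix f ((!) [a, z, w])) 0 1"
    by (rule psd_on_pair_psd_matrix[OF _ pick_matrix_hermitian]) simp_all
  then show ?thesis
    by (simp add: psd_on_pair_def pick_matrix_def)
qed

lemma pick_positive_norm_le_1:
  assumes pick: "pick_positive 3 U f" and "open U" "U \<subseteq> ball 0 1" "a \<in> U"
  shows "cmod (f a) \<le> 1"
proof -
  obtain z where "z \<in> U" "z \<notin> {a}"
    using open_obtain_point_outside[of U "{a}"] assms(2,4) by blast
  then have "psd_on_pair (pick_matrix f ((!) [a, z])) 0 1"
    using pick_positive_pair[OF pick \<open>open U\<close> \<open>a \<in> U\<close>] by auto
  then show ?thesis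
    using pick_matrix_diag_nonneg_iff[of "(!) [a, z]" 0 f] assms(3,4)
    unfolding psd_on_pair_def by auto
qed

lemma pick_positive_unimodular_imp_constant:
  assumes pick: "pick_positive 3 U f" and "open U" "U \<subseteq> ball 0 1" "a \<in> U" "z \<in> U"
    and "cmod (f a) = 1"
  shows "f z = f a"
proof (cases "z = a")
  case False
  then have "psd_on_pair (pick_matrix f ((!) [a, z])) 0 1"
    using pick_positive_pair[OF pick \<open>open U\<close> \<open>a \<in> U\<close> \<open>z \<in> U\<close>] by auto
  moreover have "cmod a < 1" "cmod z < 1"
    using assms(3-5) by auto
  ultimately show ?thesis
    using psd_on_pair_pick_matrix_unimodular[of f "(!) [a, z]" 0 1] assms(6) by simp
qed simp

lemma pick_positive_schur_step:
  assumes pick: "pick_positive 3 U f" and "U \<subseteq> ball 0 1"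
    and "a \<in> U" "z \<in> U" "w \<in> U" "distinct [a, z, w]" "cmod (f a) < 1"
  shows "cmod (schur_step f a z) \<le> 1"
    and "cmod (schur_step f a z - schur_step f a w) * cmod (1 - z * cnj w) \<le> 2 * cmod (z - w)"
proof -
  define zs where "zs = (!) [a, z, w]"
  have zs: "zs 0 = a" "zs 1 = z" "zs 2 = w"
    by (simp_all add: zs_def)
  have norms: "cmod a < 1" "cmod z < 1" "cmod w < 1"
    using assms(2-5) by auto
  have "psd_matrix 3 (pick_matrix f zs)"
    unfolding zs_def using pick_positive_triple[OF pick assms(3-6)] .
  then have "psd_on_pair (pick_matrix (schur_step f a) zs) 1 2"
    using psd_on_pair_schur_step[where zs = zs and a = a and k = 3 and i = 1 and j = 2]
      zs assms(6,7) norms by auto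
  then show "cmod (schur_step f a z) \<le> 1"
    and "cmod (schur_step f a z - schur_step f a w) * cmod (1 - z * cnj w) \<le> 2 * cmod (z - w)"
    using psd_on_pair_pick_matrix[of "schur_step f a" zs 1 2, unfolded zs(2,3)] norms by simp_all
qed

lemma lipschitz_on_punctured_ball_tendsto:
  fixes h :: "'a::{real_normed_vector, perfect_space} \<Rightarrow> 'b::complete_space"
  assumes "C-lipschitz_on (ball a r - {a}) h" "r > 0"
  obtains L where "(h \<longlongrightarrow> L) (at a)"
proof -
  have "a islimpt ball a r - {a}"
    using islimpt_punctured[of a "ball a r"] \<open>r > 0\<close> by (simp add: islimpt_ball)
  then have "a \<in> closure (ball a r - {a})"
    by (simp add: closure_def)
  with lipschitz_on_uniformly_continuous[OF assms(1)]
  obtain L where "(h \<longlongrightarrow> L) (at a within ball a r - {a})"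
    by (rule uniformly_continuous_on_extension_at_closure)
  moreover have "at a within ball a r - {a} = at a"
    using at_within_open[of a "ball a r"] \<open>r > 0\<close> by (simp add: at_within_def)
  ultimately show ?thesis
    using that by simp
qed

lemma schur_step_tendsto:
  assumes pick: "pick_positive 3 U f" and "open U" "U \<subseteq> ball 0 1" "a \<in> U" "cmod (f a) < 1"
  obtains L where "(schur_step f a \<longlongrightarrow> L) (at a)"
proof -
  obtain e where "e > 0" "ball a e \<subseteq> U"
    using \<open>open U\<close> \<open>a \<in> U\<close> open_contains_ball by blast
  define r where "r = min e ((1 - cmod a) / 2)"
  define \<rho> where "\<rho> = cmod a + r"
  have "cmod a < 1"
    using assms(3,4) by auto
  moreover have "r \<le> (1 - cmod a) / 2"
    unfolding r_def by (rule min.cobounded2)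
  ultimately have "r > 0" "\<rho> < 1"
    using \<open>e > 0\<close> by (auto simp: r_def \<rho>_def)
  have inside: "y \<in> U" "cmod y < \<rho>" if "y \<in> ball a r" for y
  proof -
    show "y \<in> U"
      using that \<open>ball a e \<subseteq> U\<close> by (auto simp: r_def)
    have "cmod y \<le> cmod a + cmod (y - a)"
      by (rule norm_triangle_sub)
    with that show "cmod y < \<rho>"
      by (simp add: \<rho>_def dist_norm norm_minus_commute)
  qed
  have "(2 / (1 - \<rho>))-lipschitz_on (ball a r - {a}) (schur_step f a)"
  proof (rule lipschitz_onI)
    fix z w assume z: "z \<in> ball a r - {a}" and w: "w \<in> ball a r - {a}"
    show "dist (schur_step f a z) (schur_step f a w) \<le> 2 / (1 - \<rho>) * dist z w"
    proof (cases "z = w")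
      case False
      have "cmod z \<le> \<rho>" "cmod w \<le> 1"
        using inside z w \<open>\<rho> < 1\<close> by (auto intro: less_imp_le less_trans)
      then have "1 - \<rho> \<le> cmod (1 - z * cnj w)"
        by (rule one_minus_le_norm_one_minus_mult_cnj)
      then have "cmod (schur_step f a z - schur_step f a w) * (1 - \<rho>)
          \<le> cmod (schur_step f a z - schur_step f a w) * cmod (1 - z * cnj w)"
        by (simp add: mult_left_mono)
      also have "\<dots> \<le> 2 * cmod (z - w)"
        using z w False inside \<open>a \<in> U\<close>
        by (intro pick_positive_schur_step(2)[OF pick \<open>U \<subseteq> ball 0 1\<close> _ _ _ _ \<open>cmod (f a) < 1\<close>]) auto
      finally show ?thesis
        using \<open>\<rho> < 1\<close> by (simp add: dist_norm field_simps)
    qed simp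
  qed (use \<open>\<rho> < 1\<close> in simp)
  with \<open>r > 0\<close> show ?thesis
    using that by (blast intro: lipschitz_on_punctured_ball_tendsto)
qed

text \<open>Inverting the Schur transform, \<open>f = (f a + b h) / (1 + cnj (f a) b h)\<close> with
  \<open>b = blaschke a\<close> and \<open>h = schur_step f a\<close>; this expresses the difference quotient of \<open>f\<close>
  at \<open>a\<close> through \<open>h\<close> without any continuity of \<open>f\<close> at \<open>a\<close>.\<close>

lemma schur_step_difference_quotient:
  assumes "cmod (f a) < 1" "schur_factor f a z \<noteq> 0"
  shows "(f z - f a) / (z - a) = (1 - (cmod (f a))^2) * schur_step f a z
    / ((1 - cnj a * z) * (1 + cnj (f a) * blaschke a z * schur_step f a z))"
proof -
  define \<alpha> g where "\<alpha> = f a" and "g = blaschke a z * schur_step f a z"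
  have nonzero: "1 - cnj \<alpha> * f z \<noteq> 0" "z - a \<noteq> 0" "1 - cnj a * z \<noteq> 0"
    using assms(2) by (auto simp: schur_factor_def blaschke_def \<alpha>_def)
  have fz: "f z - \<alpha> = g * (1 - cnj \<alpha> * f z)"
    using assms(2) by (simp add: g_def schur_step_def schur_factor_def \<alpha>_def field_simps)
  have "(cmod \<alpha>)^2 < 1"
    using assms(1) by (simp add: \<alpha>_def abs_square_less_1)
  then have "\<alpha> * cnj \<alpha> \<noteq> 1"
    using complex_norm_square[of \<alpha>] by (metis of_real_eq_1_iff order_less_irrefl)
  have "1 + cnj \<alpha> * g \<noteq> 0"
  proof
    assume "1 + cnj \<alpha> * g = 0"
    moreover from this fz have "g = - \<alpha>"
      by algebra
    ultimately have "\<alpha> * cnj \<alpha> = 1"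
      by algebra
    with \<open>\<alpha> * cnj \<alpha> \<noteq> 1\<close> show False ..
  qed
  moreover have "(f z - \<alpha>) * (1 + cnj \<alpha> * g) = g * (1 - \<alpha> * cnj \<alpha>)"
    using fz by algebra
  ultimately have "f z - \<alpha> = (1 - \<alpha> * cnj \<alpha>) * g / (1 + cnj \<alpha> * g)"
    by (simp add: eq_divide_eq mult.commute)
  then have "(f z - \<alpha>) / (z - a) = (1 - \<alpha> * cnj \<alpha>) * (g / (z - a)) / (1 + cnj \<alpha> * g)"
    by simp
  also have "g / (z - a) = schur_step f a z / (1 - cnj a * z)"
    using nonzero by (simp add: g_def blaschke_def)
  also have "1 - \<alpha> * cnj \<alpha> = of_real (1 - (cmod \<alpha>)^2)"
    using complex_norm_square[of \<alpha>] by simp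
  finally show ?thesis
    by (simp add: \<alpha>_def g_def mult.assoc)
qed

lemma pick_positive_field_differentiable:
  assumes pick: "pick_positive 3 U f" and "open U" "U \<subseteq> ball 0 1" "a \<in> U"
  shows "f field_differentiable (at a)"
proof (cases "cmod (f a) = 1")
  case True
  have "((\<lambda>_. f a) has_field_derivative 0) (at a)"
    by simp
  then have "(f has_field_derivative 0) (at a)"
    by (rule has_field_derivative_transform_within_open[OF _ \<open>open U\<close> \<open>a \<in> U\<close>])
      (metis pick_positive_unimodular_imp_constant[OF assms _ True])
  then show ?thesis
    by (auto simp: field_differentiable_def)
next
  case False
  with pick_positive_norm_le_1[OF assms] have "cmod (f a) < 1"
    by simp
  then obtain L where L: "(schur_step f a \<longlongrightarrow> L) (at a)"
    using schur_step_tendsto[OF assms] by blast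
  have "cmod a < 1"
    using assms(3,4) by auto
  then have "1 - cnj a * a \<noteq> 0"
    using one_minus_mult_neq_0[of "cnj a" a] by simp
  then have "((\<lambda>z. (1 - (cmod (f a))^2) * schur_step f a z
      / ((1 - cnj a * z) * (1 + cnj (f a) * blaschke a z * schur_step f a z)))
    \<longlongrightarrow> (1 - (cmod (f a))^2) * L / ((1 - cnj a * a) * (1 + cnj (f a) * blaschke a a * L))) (at a)"
    unfolding blaschke_def by (intro tendsto_intros L) auto
  then have "((\<lambda>z. (f z - f a) / (z - a))
      \<longlongrightarrow> (1 - (cmod (f a))^2) * L / ((1 - cnj a * a) * (1 + cnj (f a) * blaschke a a * L))) (at a)"
  proof (rule Lim_transform_within_open[OF _ \<open>open U\<close> \<open>a \<in> U\<close>])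
    fix z assume "z \<in> U" "z \<noteq> a"
    then have "schur_factor f a z \<noteq> 0"
      using schur_factor_neq_0 \<open>cmod a < 1\<close> \<open>cmod (f a) < 1\<close> assms(3)
        pick_positive_norm_le_1[OF pick \<open>open U\<close> assms(3)] by auto
    then show "(1 - (cmod (f a))^2) * schur_step f a z
        / ((1 - cnj a * z) * (1 + cnj (f a) * blaschke a z * schur_step f a z)) = (f z - f a) / (z - a)"
      using schur_step_difference_quotient \<open>cmod (f a) < 1\<close> by simp
  qed
  then show ?thesis
    by (auto simp: field_differentiable_def has_field_derivative_iff)
qed

theorem hindmarsh:
  assumes "pick_positive 3 U f" "open U" "U \<subseteq> ball 0 1"
  shows "f holomorphic_on U" and "\<And>z. z \<in> U \<Longrightarrow> cmod (f z) \<le> 1"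
  using pick_positive_field_differentiable[OF assms] pick_positive_norm_le_1[OF assms]
  by (auto simp: holomorphic_on_def field_differentiable_at_within)

section \<open>Removable singularities along discrete sets\<close>

lemma discrete_in_sparse_in:
  assumes "open D" "discrete_in Z D"
  shows "Z sparse_in D"
  using assms by (simp add: sparse_in_open discrete_in_def)

lemma open_Diff_discrete_in:
  assumes "open D" "discrete_in Z D"
  shows "open (D - Z)"
  using open_diff_sparse_pts[OF assms(1) discrete_in_sparse_in[OF assms]] .

lemma discrete_in_punctured_ball:
  assumes "open D" "discrete_in Z D" "x \<in> D"
  obtains r where "r > 0" "ball x r - {x} \<subseteq> D - Z"
proof -
  obtain B where "open B" "x \<in> B" "\<forall>y\<in>B. y \<noteq> x \<longrightarrow> y \<notin> Z"
    using sparse_in_not_in[OF discrete_in_sparse_in[OF assms(1,2)] assms(3)] .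
  moreover obtain r where "r > 0" "ball x r \<subseteq> B \<inter> D"
    using open_contains_ball_eq[of "B \<inter> D"] \<open>open D\<close> calculation(1,2) assms(3) by blast
  ultimately show ?thesis
    using that by blast
qed

lemma bounded_punctured_holomorphic_tendsto:
  assumes "r > 0" "g holomorphic_on ball x r - {x}" "\<And>z. z \<in> ball x r - {x} \<Longrightarrow> cmod (g z) \<le> B"
  obtains c where "g \<midarrow>x\<rightarrow> c" "cmod c \<le> B"
proof -
  have bounded: "eventually (\<lambda>z. cmod (g z) \<le> B) (at x)"
    using assms(1,3) by (auto simp: eventually_at dist_commute intro!: exI[of _ r])
  then obtain G where "G holomorphic_on ball x r" and G: "\<And>z. z \<in> ball x r - {x} \<Longrightarrow> G z = g z"
    using holomorphic_on_extend_bounded[OF assms(2)] bounded \<open>r > 0\<close> by (auto simp: interior_open)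
  then have "G \<midarrow>x\<rightarrow> G x"
    using \<open>r > 0\<close> by (metis centre_in_ball continuous_on_interior holomorphic_on_imp_continuous_on
        interior_ball isContD)
  then have "g \<midarrow>x\<rightarrow> G x"
    by (rule Lim_transform_within_open[OF _ open_ball[of x r]]) (use \<open>r > 0\<close> G in auto)
  moreover from this bounded have "cmod (G x) \<le> B"
    by (rule Lim_norm_ubound[rotated]) simp
  ultimately show ?thesis
    using that by blast
qed

lemma bounded_holomorphic_remove_sings:
  assumes "open D" "discrete_in Z D" "g holomorphic_on D - Z" "\<And>z. z \<in> D - Z \<Longrightarrow> cmod (g z) \<le> B"
  shows "remove_sings g holomorphic_on D"
    and "\<And>z. z \<in> D \<Longrightarrow> cmod (remove_sings g z) \<le> B"
    and "\<And>z. z \<in> D - Z \<Longrightarrow> remove_sings g z = g z"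
proof -
  have g_analytic: "g analytic_on D - Z"
    using assms(3) open_Diff_discrete_in[OF assms(1,2)] by (simp add: analytic_on_open)
  have at_point: "remove_sings g analytic_on {x} \<and> cmod (remove_sings g x) \<le> B" if "x \<in> D" for x
  proof -
    obtain r where "r > 0" and r: "ball x r - {x} \<subseteq> D - Z"
      using discrete_in_punctured_ball[OF assms(1,2) \<open>x \<in> D\<close>] .
    then have "g holomorphic_on ball x r - {x}"
      using assms(3) holomorphic_on_subset by blast
    then obtain c where c: "g \<midarrow>x\<rightarrow> c" "cmod c \<le> B"
      using bounded_punctured_holomorphic_tendsto[OF \<open>r > 0\<close>] r assms(4) by blast
    have "isolated_singularity_at g x"
      unfolding isolated_singularity_at_def
      using \<open>r > 0\<close> analytic_on_subset[OF g_analytic r] by blast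
    then show ?thesis
      using remove_sings_analytic_at[OF _ c(1)] remove_sings_eqI[OF c(1)] c(2) by simp
  qed
  show "remove_sings g holomorphic_on D"
    using at_point analytic_on_analytic_at analytic_imp_holomorphic by blast
  show "cmod (remove_sings g z) \<le> B" if "z \<in> D" for z
    using at_point[OF that] by blast
  show "remove_sings g z = g z" if "z \<in> D - Z" for z
    using analytic_on_subset[OF g_analytic, of "{z}"] that by simp
qed

lemma iterated_removal_open:
  fixes D Z :: "nat \<Rightarrow> complex set"
  assumes "D 0 = ball 0 1" "\<And>j. D (Suc j) = D j - Z j" "\<And>j. discrete_in (Z j) (D j)"
  shows "open (D j) \<and> D j \<subseteq> ball 0 1"
proof (induction j)
  case (Suc j)
  then show ?case
    using open_Diff_discrete_in[OF _ assms(3)] assms(2) by auto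
qed (simp add: assms(1))

lemma iterated_removal_schur_extension:
  fixes D Z :: "nat \<Rightarrow> complex set"
  assumes D: "D 0 = ball 0 1" "\<And>j. D (Suc j) = D j - Z j" "\<And>j. discrete_in (Z j) (D j)"
    and "g holomorphic_on D j" "\<forall>z\<in>D j. cmod (g z) \<le> 1"
  shows "\<exists>S. schur_function S \<and> (\<forall>z\<in>D j. S z = g z)"
  using assms(4,5)
proof (induction j arbitrary: g)
  case 0
  then show ?case
    by (auto simp: schur_function_def D(1))
next
  case (Suc j)
  have "open (D j)"
    using iterated_removal_open[OF D] by blast
  moreover have "g holomorphic_on D j - Z j" "\<And>z. z \<in> D j - Z j \<Longrightarrow> cmod (g z) \<le> 1"
    using Suc.prems by (simp_all add: D(2))
  ultimately have G: "remove_sings g holomorphic_on D j" "\<forall>z\<in>D j. cmod (remove_sings g z) \<le> 1"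
    "\<forall>z\<in>D j - Z j. remove_sings g z = g z"
    using bounded_holomorphic_remove_sings[OF _ D(3), of j g 1] by simp_all
  obtain S where "schur_function S" "\<forall>z\<in>D j. S z = remove_sings g z"
    using Suc.IH G(1,2) by blast
  then show ?case
    using G(3) by (auto simp: D(2))
qed

theorem corollary6p2:
  fixes D Z :: "nat \<Rightarrow> complex set"
  assumes "D 0 = ball 0 1"
    and "\<And>j. D (Suc j) = D j - Z j"
    and "\<And>j. discrete_in (Z j) (D j)"
  shows "\<forall>j. hindmarsh_property 3 (D j)"
proof
  fix j
  have D: "open (D j)" "D j \<subseteq> ball 0 1"
    using iterated_removal_open[OF assms] by blast+
  show "hindmarsh_property 3 (D j)"
    unfolding hindmarsh_property_def
  proof (intro conjI allI impI)
    show "open (D j)" "D j \<subseteq> ball 0 1"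
      by (fact D)+
    fix f
    assume "\<forall>z. (\<forall>i<3. z i \<in> D j) \<and> inj_on z {..<3} \<longrightarrow> psd_matrix 3 (pick_matrix f z)"
    then have "pick_positive 3 (D j) f"
      by (simp add: pick_positive_def)
    from hindmarsh[OF this D] show "\<exists>S. schur_function S \<and> (\<forall>w\<in>D j. S w = f w)"
      by (intro iterated_removal_schur_extension[OF assms]) auto
  qed
qed

end
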